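(* Let $0\le\underline{s}<\overline{s}\le1$ with $\underline{s}=0$ or $\overline{s}=1$, $p\in(0,1)$, $u,v>0$ with $u\ne v$, with $\mathcal{E}_0\ne\emptyset$, fix $\varepsilon_0>0$ and $n\in\mathbb{N}$, and let $$\underline{\lambda}=\min\Big\{\tfrac{u-\sup C_{\varepsilon_0}}{1+\sup C_{\varepsilon_0}},\tfrac{v+\inf C_{\varepsilon_0}}{1-\inf C_{\varepsilon_0}}\Big\},\qquad \overline{\lambda}=\max\Big\{\tfrac{u-\inf C_{\varepsilon_0}}{1+\inf C_{\varepsilon_0}},\tfrac{v+\sup C_{\varepsilon_0}}{1-\sup C_{\varepsilon_0}}\Big\}.$$ Let $F_n^{[\underline{\lambda},\overline{\lambda}]}$ be the set of $f\in F^\infty_{(\underline{s},\overline{s})}$ for which there is $S\subset C_{\varepsilon_0}$ of Lebesgue measure $m(S)\ge\frac1n$ such that for each $c\in S$, $G_f(\lambda,0)=G_f(\lambda,c)=0$ for some $\lambda\in\mathcal{E}_0\cap\mathcal{E}_c\cap[\underline{\lambda},\overline{\lambda}]$, and let $\overline{F}_n^{[\underline{\lambda},\overline{\lambda}]}$ be its closure in $F^\infty_{(\underline{s},\overline{s})}$ (for the $L_\infty$-norm). If $f\in\overline{F}_n^{[\underline{\lambda},\overline{\lambda}]}$, then there exists $S\subset C_{\varepsilon_0}$ with $m(S)\ge\frac1n$ such that for every $c\in S$ the system $G_f(\lambda,0)=G_f(\lambda,c)=0$ has a solution $\lambda\in\overline{\mathcal{E}}_0\cap\overline{\mathcal{E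}}_c\cap[\underline{\lambda},\overline{\lambda}]$.
   Context: $F^\infty_{(\underline{s},\overline{s})}=\{f\in L_\infty(\underline{s},\overline{s})\cap C^0(\underline{s},\overline{s}): \int_{\underline{s}}^{\overline{s}} f(s)\frac{1-2s}{s}ds=0,\ \int_{\underline{s}}^{\overline{s}} f=1,\ f\ge0,\ f(s)\frac{1-s}{s}\in L_\infty(\underline{s},\overline{s})\}$. For $\lambda>0$, $c\in(-1,u)\cap(-v,1)$: $m(\lambda,c)=\frac{\lambda(1+c)}{\lambda(1+c)+(u-c)}$, $mm(\lambda,c)=\frac{\lambda(1-c)}{\lambda(1-c)+(v+c)}$; $\mathcal{E}_c=\{\lambda>0: m(\lambda,c),mm(\lambda,c)\in(\underline{s},\overline{s})\}$, with closure $\overline{\mathcal{E}}_c$ in $\mathbb{R}$. $C=\{c\in(-1,u)\cap(-v,1):\mathcal{E}_c\ne\emptyset\}\setminus\{0\}$, $C_{\varepsilon_0}=C\cap(-1+\varepsilon_0,u-\varepsilon_0)\cap(-v+\varepsilon_0,1-\varepsilon_0)$. For $\lambda$ with $m(\lambda,c),mm(\lambda,c)\in[\underline{s},\overline{s}]$, $G_f(\lambda,c)=p\int_{\underline{s}}^{m(\lambda,c)} f(s)\frac{1-2s}{s}ds+(1-p)\int_{mm(\lambda,c)}^{\overline{s}} f(s)\frac{1-2s}{s}ds$. *)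

theory Defs
  imports "HOL-Analysis.Analysis"
begin

definition mfun :: "real \<Rightarrow> real \<Rightarrow> real \<Rightarrow> real" where
  "mfun u lam c = lam * (1 + c) / (lam * (1 + c) + (u - c))"

definition mmfun :: "real \<Rightarrow> real \<Rightarrow> real \<Rightarrow> real" where
  "mmfun v lam c = lam * (1 - c) / (lam * (1 - c) + (v + c))"

definition Eset :: "real \<Rightarrow> real \<Rightarrow> real \<Rightarrow> real \<Rightarrow> real \<Rightarrow> real set" where
  "Eset slo shi u v c = {lam. lam > 0 \<and> mfun u lam c \<in> {slo<..<shi} \<and> mmfun v lam c \<in> {slo<..<shi}}"

definition Cset :: "real \<Rightarrow> real \<Rightarrow> real \<Rightarrow> real \<Rightarrow> real set" where
  "Cset slo shi u v =
     {c. -1 < c \<and> c < u \<and> -v < c \<and> c < 1 \<and> Eset slo shi u v c \<noteq> {}} - {0}"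

definition Ceps :: "real \<Rightarrow> real \<Rightarrow> real \<Rightarrow> real \<Rightarrow> real \<Rightarrow> real set" where
  "Ceps slo shi u v eps0 =
     Cset slo shi u v \<inter> {-1 + eps0<..<u - eps0} \<inter> {-v + eps0<..<1 - eps0}"

definition Finf :: "real \<Rightarrow> real \<Rightarrow> (real \<Rightarrow> real) set" where
  "Finf slo shi = {f.
      continuous_on {slo<..<shi} f \<and>
      bounded (f ` {slo<..<shi}) \<and>
      ((\<lambda>s. f s * (1 - 2 * s) / s) has_integral 0) {slo<..<shi} \<and>
      (f has_integral 1) {slo<..<shi} \<and>
      (\<forall>s\<in>{slo<..<shi}. f s \<ge> 0) \<and>
      bounded ((\<lambda>s. f s * (1 - s) / s) ` {slo<..<shi})}"

definition Gf :: "real \<Rightarrow> real \<Rightarrow> real \<Rightarrow> real \<Rightarrow> real \<Rightarrow> (real \<Rightarrow> real) \<Rightarrow> real \<Rightarrow> real \<Rightarrow> real" where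
  "Gf slo shi p u v f lam c =
     p * integral {slo..mfun u lam c} (\<lambda>s. f s * (1 - 2 * s) / s)
     + (1 - p) * integral {mmfun v lam c..shi} (\<lambda>s. f s * (1 - 2 * s) / s)"

definition lam_lo :: "real \<Rightarrow> real \<Rightarrow> real \<Rightarrow> real \<Rightarrow> real \<Rightarrow> real" where
  "lam_lo slo shi u v eps0 =
     (let C = Ceps slo shi u v eps0 in
      min ((u - Sup C) / (1 + Sup C)) ((v + Inf C) / (1 - Inf C)))"

definition lam_hi :: "real \<Rightarrow> real \<Rightarrow> real \<Rightarrow> real \<Rightarrow> real \<Rightarrow> real" where
  "lam_hi slo shi u v eps0 =
     (let C = Ceps slo shi u v eps0 in
      max ((u - Inf C) / (1 + Inf C)) ((v + Sup C) / (1 - Sup C)))"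

definition Fn :: "real \<Rightarrow> real \<Rightarrow> real \<Rightarrow> real \<Rightarrow> real \<Rightarrow> real \<Rightarrow> nat \<Rightarrow> (real \<Rightarrow> real) set" where
  "Fn slo shi p u v eps0 n = {f \<in> Finf slo shi.
      \<exists>S \<subseteq> Ceps slo shi u v eps0. S \<in> sets lebesgue \<and>
        emeasure lebesgue S \<ge> ennreal (1 / real n) \<and>
        (\<forall>c\<in>S. \<exists>lam \<in> Eset slo shi u v 0 \<inter> Eset slo shi u v c
                          \<inter> {lam_lo slo shi u v eps0..lam_hi slo shi u v eps0}.
              Gf slo shi p u v f lam 0 = 0 \<and> Gf slo shi p u v f lam c = 0)}"

text \<open>Closure of F_n inside F^infty w.r.t. the sup (= L-infinity, by continuity) norm on (slo, shi).\<close>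
definition Fn_closure :: "real \<Rightarrow> real \<Rightarrow> real \<Rightarrow> real \<Rightarrow> real \<Rightarrow> real \<Rightarrow> nat \<Rightarrow> (real \<Rightarrow> real) set" where
  "Fn_closure slo shi p u v eps0 n = {f \<in> Finf slo shi.
      \<forall>e>0. \<exists>g \<in> Fn slo shi p u v eps0 n. \<forall>s\<in>{slo<..<shi}. \<bar>f s - g s\<bar> \<le> e}"

end

theory Submission
  imports Defs
begin

text \<open>Approximate \<open>f\<close> uniformly by \<open>g\<^sub>k \<in> F\<^sub>n\<close> with witness sets \<open>S\<^sub>k\<close> and take \<open>S = limsup S\<^sub>k\<close>:
  all \<open>S\<^sub>k\<close> lie in the bounded set \<open>C\<^sub>\<epsilon>\<^sub>0\<close>, so continuity from above gives \<open>m(S) \<ge> 1/n\<close>.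
  A point \<open>c \<in> S\<close> lies in infinitely many \<open>S\<^sub>k\<close>; the corresponding common zeros \<open>\<lambda>\<^sub>k\<close> range
  over the compact interval \<open>[\<lambda>\<^sub>l\<^sub>o, \<lambda>\<^sub>h\<^sub>i]\<close> and have a convergent subsequence.  Its limit is a
  common zero for \<open>f\<close>, because \<open>G\<close> is jointly continuous in the density (for the sup norm) and
  in \<open>\<lambda> > 0\<close>: written as tail integrals over \<open>[m(\<lambda>,c), s\<^sub>h\<^sub>i]\<close>, whose lower ends stay away
  from \<open>0\<close>, the weight \<open>(1 - 2s)/s\<close> is bounded there.\<close>

definition weighted :: "(real \<Rightarrow> real) \<Rightarrow> real \<Rightarrow> real" where
  "weighted f s = f s * (1 - 2 * s) / s"

lemma Finf_weighted_has_integral: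
  assumes "h \<in> Finf slo shi"
  shows "(weighted h has_integral 0) {slo..shi}"
proof -
  have "((\<lambda>s. h s * (1 - 2 * s) / s) has_integral 0) {slo<..<shi}"
    using assms unfolding Finf_def by blast
  then show ?thesis
    unfolding weighted_def by (simp add: has_integral_Icc_iff_Ioo)
qed

lemma Finf_weighted_integrable:
  assumes "h \<in> Finf slo shi" "{a..b} \<subseteq> {slo..shi}"
  shows "weighted h integrable_on {a..b}"
  using integrable_subinterval_real[OF has_integral_integrable[OF Finf_weighted_has_integral] assms(2)]
    assms(1) by blast

lemma Finf_integral_weighted_head:
  assumes "h \<in> Finf slo shi" "a \<in> {slo..shi}"
  shows "integral {slo..a} (weighted h) = - integral {a..shi} (weighted h)"
proof -
  note int = Finf_weighted_has_integral[OF assms(1)]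
  have "integral {slo..a} (weighted h) + integral {a..shi} (weighted h) = integral {slo..shi} (weighted h)"
    using assms(2) by (intro Henstock_Kurzweil_Integration.integral_combine has_integral_integrable[OF int]) auto
  then show ?thesis
    using integral_unique[OF int] by simp
qed

lemma Gf_eq_tail_integrals:
  assumes "h \<in> Finf slo shi" "mfun u lam c \<in> {slo..shi}"
  shows "Gf slo shi p u v h lam c =
    (1 - p) * integral {mmfun v lam c..shi} (weighted h) - p * integral {mfun u lam c..shi} (weighted h)"
  using Finf_integral_weighted_head[OF assms]
  by (simp add: Gf_def weighted_def[abs_def] algebra_simps)

lemma abs_weighted_diff_le:
  assumes "0 < t" "t \<le> s" "s \<le> 1"
  shows "\<bar>weighted g s - weighted f s\<bar> \<le> \<bar>g s - f s\<bar> / t"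
proof -
  have "weighted g s - weighted f s = (g s - f s) * (1 - 2 * s) / s"
    by (simp add: weighted_def diff_divide_distrib left_diff_distrib)
  then have "\<bar>weighted g s - weighted f s\<bar> = \<bar>g s - f s\<bar> * \<bar>1 - 2 * s\<bar> / s"
    using assms by (simp add: abs_mult abs_divide)
  also have "\<dots> \<le> \<bar>g s - f s\<bar> / s"
    using assms by (intro divide_right_mono mult_left_le) auto
  also have "\<dots> \<le> \<bar>g s - f s\<bar> / t"
    using assms by (intro divide_left_mono) auto
  finally show ?thesis .
qed

lemma tendsto_integral_zero_if_uniformly_small:
  fixes \<phi> :: "nat \<Rightarrow> real \<Rightarrow> real"
  assumes int: "\<And>j. \<phi> j integrable_on {a j..b}"
    and a: "\<And>j. lb \<le> a j" "\<And>j. a j \<le> b"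
    and small: "\<And>\<epsilon>. 0 < \<epsilon> \<Longrightarrow> \<forall>\<^sub>F j in sequentially. \<forall>s\<in>{a j<..<b}. \<bar>\<phi> j s\<bar> \<le> \<epsilon>"
  shows "(\<lambda>j. integral {a j..b} (\<phi> j)) \<longlonglongrightarrow> 0"
  unfolding tendsto_iff dist_real_def
proof (intro allI impI)
  fix \<epsilon> :: real
  assume "0 < \<epsilon>"
  have len: "0 \<le> b - lb" using a[of 0] by simp
  define \<delta> where "\<delta> = \<epsilon> / (b - lb + 1)"
  have "0 < \<delta>" using \<open>0 < \<epsilon>\<close> len by (simp add: \<delta>_def)
  have "(b - lb) * \<delta> < \<epsilon>"
    using \<open>0 < \<epsilon>\<close> len by (simp add: \<delta>_def field_simps)
  from small[OF \<open>0 < \<delta>\<close>] show "\<forall>\<^sub>F j in sequentially. \<bar>integral {a j..b} (\<phi> j) - 0\<bar> < \<epsilon>"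
  proof eventually_elim
    case (elim j)
    have "\<bar>integral {a j..b} (\<phi> j)\<bar> = norm (integral {a j<..<b} (\<phi> j))"
      by (simp add: integral_open_interval_real)
    also have "\<dots> \<le> integral {a j<..<b} (\<lambda>_. \<delta>)"
      using elim int[of j] by (intro integral_norm_bound_integral) (auto simp: integrable_on_open_interval_real)
    also have "\<dots> = (b - a j) * \<delta>"
      using integral_open_interval_real[of "a j" b "\<lambda>_. \<delta>"] a[of j] by simp
    also have "\<dots> \<le> (b - lb) * \<delta>"
      using a[of j] \<open>0 < \<delta>\<close> by (intro mult_right_mono) auto
    finally show ?case using \<open>(b - lb) * \<delta> < \<epsilon>\<close> by simp
  qed
qed

lemma eventually_weighted_diff_small:
  assumes lim: "uniform_limit {slo<..<shi} h f sequentially"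
    and xs: "\<And>j. xs j \<in> {slo..shi}" "xs \<longlonglongrightarrow> x" and "0 < x" "shi \<le> 1" and "0 < \<epsilon>"
  shows "\<forall>\<^sub>F j in sequentially. \<forall>s\<in>{xs j<..<shi}. \<bar>weighted (h j) s - weighted f s\<bar> \<le> \<epsilon>"
proof -
  have "\<forall>\<^sub>F j in sequentially. x / 2 < xs j"
    using xs(2) \<open>0 < x\<close> by (intro order_tendstoD) auto
  moreover have "\<forall>\<^sub>F j in sequentially. \<forall>s\<in>{slo<..<shi}. dist (h j s) (f s) < \<epsilon> * (x / 2)"
    using \<open>0 < \<epsilon>\<close> \<open>0 < x\<close> by (intro uniform_limitD[OF lim]) simp
  ultimately show ?thesis
  proof eventually_elim
    case (elim j)
    show ?case
    proof
      fix s
      assume s: "s \<in> {xs j<..<shi}"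
      have "\<bar>weighted (h j) s - weighted f s\<bar> \<le> \<bar>h j s - f s\<bar> / (x / 2)"
        using s elim(1) \<open>0 < x\<close> \<open>shi \<le> 1\<close> by (intro abs_weighted_diff_le) auto
      also have "\<dots> < \<epsilon>"
        using s elim(2) xs(1)[of j] \<open>0 < x\<close> by (auto simp: dist_real_def pos_divide_less_eq)
      finally show "\<bar>weighted (h j) s - weighted f s\<bar> \<le> \<epsilon>"
        by simp
    qed
  qed
qed

lemma tendsto_tail_integral_weighted:
  assumes hF: "\<And>j. h j \<in> Finf slo shi" and fF: "f \<in> Finf slo shi"
    and lim: "uniform_limit {slo<..<shi} h f sequentially"
    and xs: "\<And>j. xs j \<in> {slo..shi}" "xs \<longlonglongrightarrow> x" and "0 < x" "shi \<le> 1"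
  shows "(\<lambda>j. integral {xs j..shi} (weighted (h j))) \<longlonglongrightarrow> integral {x..shi} (weighted f)"
proof -
  have x: "x \<in> {slo..shi}"
    using closed_sequentially[of "{slo..shi}"] xs by blast
  have inth: "weighted (h j) integrable_on {xs j..shi}" for j
    using Finf_weighted_integrable[OF hF] xs(1)[of j] by auto
  have intf: "weighted f integrable_on {xs j..shi}" for j
    using Finf_weighted_integrable[OF fF] xs(1)[of j] by auto
  have "(\<lambda>j. integral {xs j..shi} (\<lambda>s. weighted (h j) s - weighted f s)) \<longlonglongrightarrow> 0"
    using inth intf xs(1) eventually_weighted_diff_small[OF lim xs \<open>0 < x\<close> \<open>shi \<le> 1\<close>]
    by (intro tendsto_integral_zero_if_uniformly_small[where lb = slo]) (auto intro: integrable_diff)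
  moreover have "(\<lambda>j. integral {xs j..shi} (weighted f)) \<longlonglongrightarrow> integral {x..shi} (weighted f)"
    using continuous_on_tendsto_compose[OF indefinite_integral_continuous_1'[OF
        has_integral_integrable[OF Finf_weighted_has_integral[OF fF]]] xs(2) x] xs(1)
    by simp
  ultimately have "(\<lambda>j. integral {xs j..shi} (\<lambda>s. weighted (h j) s - weighted f s)
      + integral {xs j..shi} (weighted f)) \<longlonglongrightarrow> 0 + integral {x..shi} (weighted f)"
    by (rule tendsto_add)
  then show ?thesis
    by (simp add: integral_diff[OF inth intf])
qed

lemma mmfun_eq_mfun: "mmfun v lam c = mfun v lam (- c)"
  by (simp add: mfun_def mmfun_def)

lemma mfun_denominator_pos:
  fixes lam c u :: real
  assumes "0 < lam" "-1 < c" "c < u"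
  shows "0 < lam * (1 + c) + (u - c)"
proof -
  have "0 < lam * (1 + c)" using assms by (intro mult_pos_pos) auto
  then show ?thesis using assms by linarith
qed

lemma mfun_pos:
  assumes "0 < lam" "-1 < c" "c < u"
  shows "0 < mfun u lam c"
  using assms mfun_denominator_pos[OF assms] unfolding mfun_def
  by (intro divide_pos_pos mult_pos_pos) auto

lemma isCont_mfun:
  assumes "0 < lam" "-1 < c" "c < u"
  shows "isCont (\<lambda>lam. mfun u lam c) lam"
  using mfun_denominator_pos[OF assms] unfolding mfun_def
  by (intro continuous_intros) auto

lemma tendsto_Gf:
  assumes hF: "\<And>j. h j \<in> Finf slo shi" and fF: "f \<in> Finf slo shi"
    and lim: "uniform_limit {slo<..<shi} h f sequentially"
    and E: "\<And>j. ls j \<in> Eset slo shi u v c" and ls: "ls \<longlonglongrightarrow> l" "0 < l"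
    and c: "-1 < c" "c < u" "-v < c" "c < 1" and "shi \<le> 1"
  shows "(\<lambda>j. Gf slo shi p u v (h j) (ls j) c) \<longlonglongrightarrow> Gf slo shi p u v f l c"
proof -
  have c': "-1 < - c" "- c < v" using c by auto
  have m: "(\<lambda>j. mfun u (ls j) c) \<longlonglongrightarrow> mfun u l c"
    by (rule isCont_tendsto_compose[OF isCont_mfun[OF ls(2) c(1,2)] ls(1)])
  have mm: "(\<lambda>j. mmfun v (ls j) c) \<longlonglongrightarrow> mmfun v l c"
    unfolding mmfun_eq_mfun by (rule isCont_tendsto_compose[OF isCont_mfun[OF ls(2) c'] ls(1)])
  have mj: "mfun u (ls j) c \<in> {slo..shi}" "mmfun v (ls j) c \<in> {slo..shi}" for j
    using E[of j] by (auto simp: Eset_def)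
  have ml: "mfun u l c \<in> {slo..shi}" "mmfun v l c \<in> {slo..shi}"
    by (rule closed_sequentially[OF closed_real_atLeastAtMost _ m] closed_sequentially[OF closed_real_atLeastAtMost _ mm];
        use mj in simp)+
  show ?thesis
    unfolding Gf_eq_tail_integrals[OF hF mj(1)] Gf_eq_tail_integrals[OF fF ml(1)]
    using mfun_pos[OF ls(2) c(1,2)] mfun_pos[OF ls(2) c'] \<open>shi \<le> 1\<close>
    by (intro tendsto_intros tendsto_tail_integral_weighted[OF hF fF lim] m mm mj)
      (simp_all add: mmfun_eq_mfun)
qed

lemma emeasure_limsup_ge:
  assumes S: "\<And>k. S k \<in> sets M" "\<And>k. S k \<subseteq> A"
    and A: "A \<in> sets M" "emeasure M A \<noteq> \<infinity>"
    and a: "\<And>k. a \<le> emeasure M (S k)"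
  shows "a \<le> emeasure M (limsup S)"
proof -
  define T where "T m = (\<Union>k\<in>{m..}. S k)" for m
  have T: "T m \<in> sets M" for m
    unfolding T_def using S(1) by auto
  have "emeasure M (T m) \<le> emeasure M A" for m
    using S(2) A(1) by (intro emeasure_mono) (auto simp: T_def)
  then have "emeasure M (T m) \<noteq> \<infinity>" for m
    using A(2) neq_top_trans by (metis infinity_ennreal_def)
  moreover have "decseq T"
    unfolding T_def decseq_def by (auto intro: order_trans)
  ultimately have "(INF m. emeasure M (T m)) = emeasure M (\<Inter>m. T m)"
    using T by (intro INF_emeasure_decseq) auto
  moreover have "a \<le> emeasure M (T m)" for m
  proof -
    have "S m \<subseteq> T m" unfolding T_def by auto
    from a[of m] emeasure_mono[OF this T] show ?thesis by (rule order_trans)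
  qed
  moreover have "limsup S = (\<Inter>m. T m)"
    by (simp add: limsup_INF_SUP T_def)
  ultimately show ?thesis
    by (metis INF_greatest)
qed

lemma lam_lo_pos:
  assumes "Ceps slo shi u v eps0 \<noteq> {}" "0 < eps0"
  shows "0 < lam_lo slo shi u v eps0"
proof -
  define C where "C = Ceps slo shi u v eps0"
  obtain c where "c \<in> C" using assms(1) unfolding C_def by blast
  have C: "C \<subseteq> {-1<..<1} \<inter> {-v + eps0<..<u - eps0}"
    unfolding C_def Ceps_def Cset_def by auto
  have "c \<le> Sup C"
    using \<open>c \<in> C\<close> C by (intro cSup_upper bdd_aboveI[of _ "u - eps0"]) auto
  moreover have "Sup C \<le> u - eps0"
    using \<open>c \<in> C\<close> C by (intro cSup_least) auto
  moreover have "Inf C \<le> c"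
    using \<open>c \<in> C\<close> C by (intro cInf_lower bdd_belowI[of _ "-v + eps0"]) auto
  moreover have "-v + eps0 \<le> Inf C"
    using \<open>c \<in> C\<close> C by (intro cInf_greatest) auto
  moreover have "-1 < c" "c < 1"
    using \<open>c \<in> C\<close> C by auto
  ultimately show ?thesis
    using assms(2) by (simp add: lam_lo_def C_def[symmetric] Let_def divide_pos_pos)
qed

lemma Fn_closure_uniform_approx:
  assumes "f \<in> Fn_closure slo shi p u v eps0 n"
  obtains g where "\<And>k. g k \<in> Fn slo shi p u v eps0 n"
    and "uniform_limit {slo<..<shi} g f sequentially"
proof -
  have "\<forall>k. \<exists>g \<in> Fn slo shi p u v eps0 n. \<forall>s\<in>{slo<..<shi}. \<bar>f s - g s\<bar> \<le> inverse (real (Suc k))"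
    using assms unfolding Fn_closure_def by auto
  then obtain g where g: "\<And>k. g k \<in> Fn slo shi p u v eps0 n"
    and close: "\<And>k s. s \<in> {slo<..<shi} \<Longrightarrow> \<bar>f s - g k s\<bar> \<le> inverse (real (Suc k))"
    by metis
  have dist_le: "dist (g k s) (f s) \<le> inverse (real (Suc k))" if "s \<in> {slo<..<shi}" for k s
    using close[OF that] by (simp add: dist_real_def abs_minus_commute)
  have "uniform_limit {slo<..<shi} g f sequentially"
  proof (rule uniform_limitI)
    fix e :: real
    assume "0 < e"
    with LIMSEQ_inverse_real_of_nat have "\<forall>\<^sub>F k in sequentially. inverse (real (Suc k)) < e"
      by (rule order_tendstoD)
    then show "\<forall>\<^sub>F k in sequentially. \<forall>s\<in>{slo<..<shi}. dist (g k s) (f s) < e"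
      by eventually_elim (use dist_le in \<open>blast intro: le_less_trans\<close>)
  qed
  with g show ?thesis by (rule that)
qed

lemma Fn_witness_sets:
  assumes "\<And>k. g k \<in> Fn slo shi p u v eps0 n"
  obtains SS where "\<And>k. SS k \<subseteq> Ceps slo shi u v eps0" "\<And>k. SS k \<in> sets lebesgue"
    "\<And>k. ennreal (1 / real n) \<le> emeasure lebesgue (SS k)"
    "\<And>k c. c \<in> SS k \<Longrightarrow> \<exists>lam \<in> Eset slo shi u v 0 \<inter> Eset slo shi u v c
        \<inter> {lam_lo slo shi u v eps0..lam_hi slo shi u v eps0}.
        Gf slo shi p u v (g k) lam 0 = 0 \<and> Gf slo shi p u v (g k) lam c = 0"
proof -
  from assms have "\<forall>k. \<exists>S. S \<subseteq> Ceps slo shi u v eps0 \<and> S \<in> sets lebesgue \<and>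
      ennreal (1 / real n) \<le> emeasure lebesgue S \<and>
      (\<forall>c\<in>S. \<exists>lam \<in> Eset slo shi u v 0 \<inter> Eset slo shi u v c
        \<inter> {lam_lo slo shi u v eps0..lam_hi slo shi u v eps0}.
        Gf slo shi p u v (g k) lam 0 = 0 \<and> Gf slo shi p u v (g k) lam c = 0)"
    by (auto simp: Fn_def)
  then show ?thesis
    using that by metis
qed

lemma Gf_eq_zero_of_limit:
  assumes hF: "\<And>j. h j \<in> Finf slo shi" and fF: "f \<in> Finf slo shi"
    and lim: "uniform_limit {slo<..<shi} h f sequentially"
    and E: "\<And>j. ls j \<in> Eset slo shi u v c" and ls: "ls \<longlonglongrightarrow> l" "0 < l"
    and c: "-1 < c" "c < u" "-v < c" "c < 1" and "shi \<le> 1"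
    and zero: "\<And>j. Gf slo shi p u v (h j) (ls j) c = 0"
  shows "Gf slo shi p u v f l c = 0"
  using tendsto_Gf[OF hF fF lim E ls c \<open>shi \<le> 1\<close>, of p]
  by (simp add: zero LIMSEQ_const_iff)

lemma frequently_sequentially_subseq:
  assumes "\<exists>\<^sub>F k in sequentially. P k"
  obtains r :: "nat \<Rightarrow> nat" where "strict_mono r" "\<And>j. P (r j)"
proof -
  have "infinite {k. P k}"
    using assms unfolding cofinite_eq_sequentially[symmetric] frequently_cofinite .
  with infinite_enumerate that show ?thesis by blast
qed

lemma Gf_common_zero_of_limit:
  assumes gF: "\<And>k. g k \<in> Finf slo shi" and fF: "f \<in> Finf slo shi"
    and lim: "uniform_limit {slo<..<shi} g f sequentially"
    and zeros: "\<exists>\<^sub>F k in sequentially. \<exists>lam \<in> Eset slo shi u v 0 \<inter> Eset slo shi u v c \<inter> {lo..hi}.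
        Gf slo shi p u v (g k) lam 0 = 0 \<and> Gf slo shi p u v (g k) lam c = 0"
    and "0 < lo" and c: "-1 < c" "c < u" "-v < c" "c < 1"
    and "0 < u" "0 < v" "shi \<le> 1"
  shows "\<exists>lam \<in> closure (Eset slo shi u v 0) \<inter> closure (Eset slo shi u v c) \<inter> {lo..hi}.
        Gf slo shi p u v f lam 0 = 0 \<and> Gf slo shi p u v f lam c = 0"
proof -
  obtain r :: "nat \<Rightarrow> nat" where r: "strict_mono r" and "\<And>j. \<exists>lam \<in> Eset slo shi u v 0 \<inter> Eset slo shi u v c \<inter> {lo..hi}.
      Gf slo shi p u v (g (r j)) lam 0 = 0 \<and> Gf slo shi p u v (g (r j)) lam c = 0"
    using frequently_sequentially_subseq[OF zeros] by blast
  then obtain ls where ls: "\<And>j. ls j \<in> Eset slo shi u v 0 \<inter> Eset slo shi u v c \<inter> {lo..hi}"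
    and Gls: "\<And>j. Gf slo shi p u v (g (r j)) (ls j) 0 = 0" "\<And>j. Gf slo shi p u v (g (r j)) (ls j) c = 0"
    by metis
  define K where "K = closure (Eset slo shi u v 0) \<inter> closure (Eset slo shi u v c) \<inter> {lo..hi}"
  have "seq_compact K"
    unfolding K_def by (intro compact_imp_seq_compact closed_Int_compact) auto
  moreover have "\<forall>j. ls j \<in> K"
    using ls closure_subset unfolding K_def by blast
  ultimately obtain l q where "l \<in> K" "strict_mono q" and lq: "(ls \<circ> q) \<longlonglongrightarrow> l"
    by (rule seq_compactE)
  have "0 < l" using \<open>l \<in> K\<close> \<open>0 < lo\<close> unfolding K_def by auto
  have lim': "uniform_limit {slo<..<shi} (g \<circ> (r \<circ> q)) f sequentially"
    using filterlim_compose[OF lim filterlim_subseq[OF strict_mono_o[OF r \<open>strict_mono q\<close>]]]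
    by (simp add: comp_def)
  have "Gf slo shi p u v f l 0 = 0" "Gf slo shi p u v f l c = 0"
    using ls Gls gF c \<open>0 < u\<close> \<open>0 < v\<close>
    by (intro Gf_eq_zero_of_limit[OF _ fF lim' _ lq \<open>0 < l\<close> _ _ _ _ \<open>shi \<le> 1\<close>]; simp)+
  then show ?thesis
    using \<open>l \<in> K\<close> unfolding K_def by blast
qed

theorem proposition12:
  fixes slo shi p u v eps0 :: real and n :: nat and f :: "real \<Rightarrow> real"
  assumes "0 \<le> slo" "slo < shi" "shi \<le> 1" "slo = 0 \<or> shi = 1"
    and "0 < p" "p < 1"
    and "0 < u" "0 < v" "u \<noteq> v"
    and "Eset slo shi u v 0 \<noteq> {}"
    and "eps0 > 0" and "n \<ge> 1"
    and "f \<in> Fn_closure slo shi p u v eps0 n"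
  shows "\<exists>S \<subseteq> Ceps slo shi u v eps0. S \<in> sets lebesgue \<and>
           emeasure lebesgue S \<ge> ennreal (1 / real n) \<and>
           (\<forall>c\<in>S. \<exists>lam \<in> closure (Eset slo shi u v 0) \<inter> closure (Eset slo shi u v c)
                          \<inter> {lam_lo slo shi u v eps0..lam_hi slo shi u v eps0}.
              Gf slo shi p u v f lam 0 = 0 \<and> Gf slo shi p u v f lam c = 0)"
proof -
  obtain g where g: "\<And>k. g k \<in> Fn slo shi p u v eps0 n"
    and lim: "uniform_limit {slo<..<shi} g f sequentially"
    using Fn_closure_uniform_approx[OF assms(13)] by blast
  obtain SS where SS: "\<And>k. SS k \<subseteq> Ceps slo shi u v eps0" "\<And>k. SS k \<in> sets lebesgue"
      "\<And>k. ennreal (1 / real n) \<le> emeasure lebesgue (SS k)"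
    and zeros: "\<And>k c. c \<in> SS k \<Longrightarrow> \<exists>lam \<in> Eset slo shi u v 0 \<inter> Eset slo shi u v c
        \<inter> {lam_lo slo shi u v eps0..lam_hi slo shi u v eps0}.
        Gf slo shi p u v (g k) lam 0 = 0 \<and> Gf slo shi p u v (g k) lam c = 0"
    using Fn_witness_sets[where g = g, OF g] by blast
  have fF: "f \<in> Finf slo shi" and gF: "\<And>k. g k \<in> Finf slo shi"
    using assms(13) g by (auto simp: Fn_closure_def Fn_def)
  have sub: "limsup SS \<subseteq> Ceps slo shi u v eps0"
    using SS(1) by (intro Limsup_bounded) auto
  have "Ceps slo shi u v eps0 \<subseteq> {-1..1}"
    by (auto simp: Ceps_def Cset_def)
  then have "ennreal (1 / real n) \<le> emeasure lebesgue (limsup SS)"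
    by (intro emeasure_limsup_ge[where A = "{-1..1}"] SS(2,3)) (use SS(1) in auto)
  moreover have "\<exists>lam \<in> closure (Eset slo shi u v 0) \<inter> closure (Eset slo shi u v c)
        \<inter> {lam_lo slo shi u v eps0..lam_hi slo shi u v eps0}.
        Gf slo shi p u v f lam 0 = 0 \<and> Gf slo shi p u v f lam c = 0" if "c \<in> limsup SS" for c
  proof (rule Gf_common_zero_of_limit[OF gF fF lim frequently_elim1[OF that[unfolded mem_limsup_iff] zeros]])
    show "0 < lam_lo slo shi u v eps0"
      using that sub \<open>eps0 > 0\<close> by (intro lam_lo_pos) auto
  qed (use that sub assms in \<open>auto simp: Ceps_def Cset_def\<close>)
  ultimately show ?thesis
    using sub SS(2) by (intro exI[of _ "limsup SS"]) (auto intro: measurable_limsup)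
qed

end
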